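(* Let $T$ be a tree of order $n\geq 3$ and let $\mathcal{G}$ be an arbitrary Abelian group of order at least $5$. Then there exists a labeling $f\colon E(T)\to\mathcal{G}$ with $f(e)\neq 0$ for every edge $e$, $w_f(v)\neq 0$ for every vertex $v$, and $w_f(u)\neq w_f(v)$ for every edge $uv$.
   Context: $w_f(v)=\sum_{u\in N(v)}f(uv)$, the sum taken in $\mathcal{G}$; $0$ is the identity of $\mathcal{G}$. *)

theory Defs
  imports Main
begin

definition simple_graph :: "'a set \<Rightarrow> 'a set set \<Rightarrow> bool" where
  "simple_graph V E \<longleftrightarrow> finite V \<and> (\<forall>e\<in>E. card e = 2 \<and> e \<subseteq> V)"

definition is_walk :: "'a set set \<Rightarrow> 'a list \<Rightarrow> bool" where
  "is_walk E xs \<longleftrightarrow> xs \<noteq> [] \<and> (\<forall>i. Suc i < length xs \<longrightarrow> {xs ! i, xs ! Suc i} \<in> E)"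

definition connected_graph :: "'a set \<Rightarrow> 'a set set \<Rightarrow> bool" where
  "connected_graph V E \<longleftrightarrow>
     (\<forall>u\<in>V. \<forall>v\<in>V. \<exists>xs. is_walk E xs \<and> hd xs = u \<and> last xs = v)"

definition is_cycle :: "'a set set \<Rightarrow> 'a list \<Rightarrow> bool" where
  "is_cycle E xs \<longleftrightarrow> length xs \<ge> 3 \<and> distinct xs \<and> is_walk E xs \<and> {last xs, hd xs} \<in> E"

definition acyclic_graph :: "'a set set \<Rightarrow> bool" where
  "acyclic_graph E \<longleftrightarrow> \<not> (\<exists>xs. is_cycle E xs)"

definition is_tree :: "'a set \<Rightarrow> 'a set set \<Rightarrow> bool" where
  "is_tree V E \<longleftrightarrow> simple_graph V E \<and> V \<noteq> {} \<and> connected_graph V E \<and> acyclic_graph E"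

definition weight :: "'a set \<Rightarrow> 'a set set \<Rightarrow> ('a set \<Rightarrow> 'g::comm_monoid_add) \<Rightarrow> 'a \<Rightarrow> 'g" where
  "weight V E f v = (\<Sum>u\<in>{u\<in>V. {u, v} \<in> E}. f {u, v})"

end

theory Submission
  imports Defs
begin

(* Root the tree at r and strengthen the claim: suppose the tree hangs from a larger one by an
   extra edge at r labelled a, so that the weight of r is shifted by a, and the shifted weight of r
   must avoid a prescribed value c. If some neighbour x of r is not a leaf,
   delete the edge rx and give it a label y outside {0, -a, c - a}; label the side of r first
   (shift a + y, forbidden value c), then the side of x (shift y), forbidding at x the weight just
   obtained at r. Otherwise the tree is a star centred at r, labelled directly with leaf labels
   avoiding 0 and the weight of the centre. Each choice avoids at most four group elements,
   which is where the order of the group being at least 5 is used. *)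

definition adj :: "'a set set \<Rightarrow> 'a \<Rightarrow> 'a \<Rightarrow> bool" where
  "adj E u v \<longleftrightarrow> {u, v} \<in> E"

lemma symp_adj: "symp (adj E)"
  by (simp add: symp_def adj_def insert_commute)

lemma adj_rtranclp_sym: "(adj E)\<^sup>*\<^sup>* u v \<Longrightarrow> (adj E)\<^sup>*\<^sup>* v u"
  by (rule sympD[OF symp_rtranclp[OF symp_adj]])

lemma successively_iff_nth:
  "successively P xs \<longleftrightarrow> (\<forall>i. Suc i < length xs \<longrightarrow> P (xs ! i) (xs ! Suc i))"
  by (induction P xs rule: successively.induct) (auto simp: less_Suc_eq_0_disj)

lemma is_walk_iff_successively: "is_walk E xs \<longleftrightarrow> xs \<noteq> [] \<and> successively (adj E) xs"
  by (simp add: is_walk_def successively_iff_nth adj_def)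

lemma successively_rtranclp_hd_last:
  "successively P xs \<Longrightarrow> xs \<noteq> [] \<Longrightarrow> P\<^sup>*\<^sup>* (hd xs) (last xs)"
  by (induction P xs rule: successively.induct) (auto intro: converse_rtranclp_into_rtranclp)

lemma rtranclp_imp_distinct_successively:
  "P\<^sup>*\<^sup>* u v \<Longrightarrow> \<exists>xs. successively P xs \<and> distinct xs \<and> xs \<noteq> [] \<and> hd xs = u \<and> last xs = v"
proof (induction rule: converse_rtranclp_induct)
  case base
  show ?case by (intro exI[of _ "[v]"]) simp
next
  case (step u w)
  then obtain ys where ys: "successively P ys" "distinct ys" "ys \<noteq> []" "hd ys = w" "last ys = v"
    by blast
  show ?case
  proof (cases "u \<in> set ys")
    case True
    then obtain as bs where "ys = as @ u # bs" by (meson split_list)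
    with ys show ?thesis
      by (intro exI[of _ "u # bs"]) (auto simp: successively_append_iff)
  next
    case False
    with ys step.hyps(1) show ?thesis
      by (intro exI[of _ "u # ys"]) (auto simp: successively_Cons)
  qed
qed

lemma connected_graph_iff_rtranclp:
  "connected_graph V E \<longleftrightarrow> (\<forall>u\<in>V. \<forall>v\<in>V. (adj E)\<^sup>*\<^sup>* u v)"
  unfolding connected_graph_def is_walk_iff_successively
  by (metis successively_rtranclp_hd_last rtranclp_imp_distinct_successively)

lemma acyclic_graph_subset: "acyclic_graph E \<Longrightarrow> E' \<subseteq> E \<Longrightarrow> acyclic_graph E'"
  unfolding acyclic_graph_def is_cycle_def is_walk_def by blast

lemma simple_graph_edge_neq: "simple_graph V E \<Longrightarrow> {u, v} \<in> E \<Longrightarrow> u \<noteq> v"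
  unfolding simple_graph_def by force

lemma simple_graph_edge_vertices: "simple_graph V E \<Longrightarrow> {u, v} \<in> E \<Longrightarrow> u \<in> V \<and> v \<in> V"
  unfolding simple_graph_def by blast

lemma simple_graph_edgeE:
  assumes "simple_graph V E" "e \<in> E"
  obtains u v where "e = {u, v}" "u \<noteq> v"
  using assms unfolding simple_graph_def by (auto simp: card_2_iff)

lemma simple_graph_subset_edges: "simple_graph V E \<Longrightarrow> E' \<subseteq> E \<Longrightarrow> simple_graph V E'"
  unfolding simple_graph_def by blast

definition component :: "'a set set \<Rightarrow> 'a \<Rightarrow> 'a set" where
  "component E s = {v. (adj E)\<^sup>*\<^sup>* s v}"

lemma component_self [simp]: "s \<in> component E s"
  by (simp add: component_def)

lemma component_edge_closed: "{u, v} \<in> E \<Longrightarrow> u \<in> component E s \<Longrightarrow> v \<in> component E s"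
  by (auto simp: component_def adj_def intro: rtranclp.rtrancl_into_rtrancl)

lemma component_subset:
  assumes "simple_graph V E" "s \<in> V"
  shows "component E s \<subseteq> V"
proof
  fix v assume "v \<in> component E s"
  then have "(adj E)\<^sup>*\<^sup>* s v" by (simp add: component_def)
  then show "v \<in> V"
    by induction (auto simp: adj_def assms(2) dest: simple_graph_edge_vertices[OF assms(1)])
qed

lemma rtranclp_adj_within_component:
  "(adj E)\<^sup>*\<^sup>* s v \<Longrightarrow> (adj {e\<in>E. e \<subseteq> component E s})\<^sup>*\<^sup>* s v"
proof (induction rule: rtranclp_induct)
  case (step y z)
  have yz: "{y, z} \<in> E" using step.hyps(2) by (simp add: adj_def)
  have y: "y \<in> component E s" using step.hyps(1) by (simp add: component_def)
  have "z \<in> component E s" using component_edge_closed[OF yz y] .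
  with yz y have "adj {e\<in>E. e \<subseteq> component E s} y z" by (simp add: adj_def)
  with step.IH show ?case by (rule rtranclp.rtrancl_into_rtrancl)
qed simp

lemma component_is_tree:
  assumes "simple_graph V E" "acyclic_graph E" "s \<in> V"
  shows "is_tree (component E s) {e\<in>E. e \<subseteq> component E s}"
    (is "is_tree ?W ?F")
proof -
  have "finite ?W"
    using component_subset[OF assms(1,3)] assms(1) finite_subset by (auto simp: simple_graph_def)
  with assms(1) have "simple_graph ?W ?F" by (auto simp: simple_graph_def)
  moreover have "acyclic_graph ?F" using assms(2) by (rule acyclic_graph_subset) blast
  moreover have "connected_graph ?W ?F"
    unfolding connected_graph_iff_rtranclp
  proof (intro ballI)
    fix u v assume "u \<in> ?W" "v \<in> ?W"
    then have "(adj E)\<^sup>*\<^sup>* s u" "(adj E)\<^sup>*\<^sup>* s v"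
      by (simp_all add: component_def)
    then have "(adj ?F)\<^sup>*\<^sup>* s u" "(adj ?F)\<^sup>*\<^sup>* s v"
      by (simp_all add: rtranclp_adj_within_component)
    then show "(adj ?F)\<^sup>*\<^sup>* u v"
      by (meson adj_rtranclp_sym rtranclp_trans)
  qed
  moreover have "?W \<noteq> {}" using component_self[of s E] by blast
  ultimately show ?thesis by (simp add: is_tree_def)
qed

lemma tree_delete_edge_components_disjoint:
  assumes tree: "is_tree V E" and e: "{r, x} \<in> E"
  shows "component (E - {{r, x}}) r \<inter> component (E - {{r, x}}) x = {}"
proof (rule ccontr)
  assume "component (E - {{r, x}}) r \<inter> component (E - {{r, x}}) x \<noteq> {}"
  then obtain v where "(adj (E - {{r, x}}))\<^sup>*\<^sup>* r v" "(adj (E - {{r, x}}))\<^sup>*\<^sup>* x v"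
    by (auto simp: component_def)
  then have "(adj (E - {{r, x}}))\<^sup>*\<^sup>* r x" by (meson adj_rtranclp_sym rtranclp_trans)
  then obtain xs where xs: "successively (adj (E - {{r, x}})) xs" "distinct xs" "xs \<noteq> []"
    "hd xs = r" "last xs = x"
    using rtranclp_imp_distinct_successively by metis
  have "r \<noteq> x" using simple_graph_edge_neq[of V E r x] tree e by (auto simp: is_tree_def)
  obtain y zs where xs_eq: "xs = r # y # zs"
    using xs(3-5) \<open>r \<noteq> x\<close> by (cases xs; cases "tl xs") auto
  have "zs \<noteq> []"
  proof
    assume "zs = []"
    with xs_eq xs(1,5) have "adj (E - {{r, x}}) r x" by simp
    then show False by (simp add: adj_def)
  qed
  then have "length xs \<ge> 3" using xs_eq by (cases zs) auto
  moreover have "is_walk E xs"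
    using xs(1,3) successively_mono[OF xs(1)] by (auto simp: is_walk_iff_successively adj_def)
  moreover have "{last xs, hd xs} \<in> E" using xs e by (simp add: insert_commute)
  ultimately have "is_cycle E xs" using xs(2) by (simp add: is_cycle_def)
  with tree show False by (auto simp: is_tree_def acyclic_graph_def)
qed

lemma connected_graph_delete_edge:
  assumes "connected_graph V E" "r \<in> V"
  shows "V \<subseteq> component (E - {{r, x}}) r \<union> component (E - {{r, x}}) x"
proof
  fix v assume "v \<in> V"
  with assms have "(adj E)\<^sup>*\<^sup>* r v" by (simp add: connected_graph_iff_rtranclp)
  then show "v \<in> component (E - {{r, x}}) r \<union> component (E - {{r, x}}) x"
  proof (induction rule: rtranclp_induct)
    case (step y z)
    then have yz: "{y, z} \<in> E" by (simp add: adj_def)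
    show ?case
    proof (cases "{y, z} = {r, x}")
      case True
      then show ?thesis by (auto simp: doubleton_eq_iff)
    next
      case False
      with yz step.IH show ?thesis
        using component_edge_closed[of y z "E - {{r, x}}"] by auto
    qed
  qed simp
qed

definition neighbours :: "'a set \<Rightarrow> 'a set set \<Rightarrow> 'a \<Rightarrow> 'a set" where
  "neighbours V E v = {u\<in>V. {u, v} \<in> E}"

lemma weight_eq_sum_neighbours: "weight V E f v = (\<Sum>u\<in>neighbours V E v. f {u, v})"
  by (simp add: weight_def neighbours_def)

lemma weight_cong: "(\<And>e. e \<in> E \<Longrightarrow> f e = g e) \<Longrightarrow> weight V E f v = weight V E g v"
  unfolding weight_def by (intro sum.cong) auto

definition nz_proper_labelling ::
    "'a set \<Rightarrow> 'a set set \<Rightarrow> ('a \<Rightarrow> 'g) \<Rightarrow> ('a set \<Rightarrow> 'g::zero) \<Rightarrow> bool" where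
  "nz_proper_labelling V E w f \<longleftrightarrow>
     (\<forall>e\<in>E. f e \<noteq> 0) \<and> (\<forall>v\<in>V. w v \<noteq> 0) \<and> (\<forall>u\<in>V. \<forall>v\<in>V. {u, v} \<in> E \<longrightarrow> w u \<noteq> w v)"

(* The weight in a larger tree that contains this one and an extra edge at r labelled a. *)
definition shifted_weight ::
    "'a set \<Rightarrow> 'a set set \<Rightarrow> ('a set \<Rightarrow> 'g::comm_monoid_add) \<Rightarrow> 'a \<Rightarrow> 'g \<Rightarrow> 'a \<Rightarrow> 'g" where
  "shifted_weight V E f r a v = weight V E f v + (if v = r then a else 0)"

lemma shifted_weight_0 [simp]: "shifted_weight V E f r 0 = weight V E f"
  by (simp add: shifted_weight_def fun_eq_iff)

locale tree_edge_split =
  fixes V :: "'a set" and E :: "'a set set" and r x :: 'a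
    and Vr :: "'a set" and Er :: "'a set set" and Vx :: "'a set" and Ex :: "'a set set"
  assumes tree_r: "is_tree Vr Er" and tree_x: "is_tree Vx Ex"
    and root_r: "r \<in> Vr" and root_x: "x \<in> Vx"
    and disjoint: "Vr \<inter> Vx = {}"
    and vertices: "V = Vr \<union> Vx"
    and edges: "E = insert {r, x} (Er \<union> Ex)"
begin

lemma swap: "tree_edge_split V E x r Vx Ex Vr Er"
  using tree_r tree_x root_r root_x disjoint vertices edges
  by unfold_locales (auto simp: insert_commute)

lemma finite_r: "finite Vr"
  using tree_r by (simp add: is_tree_def simple_graph_def)

lemma edge_in_r: "e \<in> Er \<Longrightarrow> e \<subseteq> Vr \<and> e \<noteq> {}"
  using tree_r by (auto simp: is_tree_def simple_graph_def)

lemma x_notin_r: "x \<notin> Vr"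
  using disjoint root_x by blast

lemma card_r_less: "card Vr < card V"
proof -
  have "finite Vx" using tree_x by (simp add: is_tree_def simple_graph_def)
  then show ?thesis
    using finite_r vertices root_x x_notin_r by (intro psubset_card_mono) auto
qed

lemma neighbours_r:
  assumes "v \<in> Vr"
  shows "neighbours V E v = neighbours Vr Er v \<union> (if v = r then {x} else {})"
proof -
  have "e \<subseteq> Vx" if "e \<in> Ex" for e
    using tree_x that by (auto simp: is_tree_def simple_graph_def)
  then show ?thesis
    using assms x_notin_r edge_in_r root_r root_x disjoint
    by (auto simp: neighbours_def edges vertices doubleton_eq_iff insert_commute)
qed

lemma weight_r:
  assumes "v \<in> Vr"
  shows "weight V E f v = weight Vr Er f v + (if v = r then f {r, x} else 0)"
proof -
  have "finite (neighbours Vr Er v)" "x \<notin> neighbours Vr Er v"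
    using finite_r x_notin_r by (simp_all add: neighbours_def)
  then show ?thesis
    unfolding weight_eq_sum_neighbours neighbours_r[OF assms]
    by (cases "v = r") (simp_all add: insert_commute add.commute)
qed

lemma neighbour_of_x_in_x:
  assumes "{x, z} \<in> E" "z \<noteq> r"
  shows "z \<in> Vx"
proof -
  have "{x, z} \<in> Ex"
    using assms x_notin_r root_r edge_in_r by (auto simp: edges doubleton_eq_iff)
  then show ?thesis using tree_x by (auto simp: is_tree_def simple_graph_def)
qed

lemma glue_labellings:
  fixes fr fx :: "'a set \<Rightarrow> 'g::comm_monoid_add"
  assumes fr: "nz_proper_labelling Vr Er (shifted_weight Vr Er fr r (a + y)) fr"
    and fx: "nz_proper_labelling Vx Ex (shifted_weight Vx Ex fx x y) fx"
    and "y \<noteq> 0"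
    and roots: "shifted_weight Vx Ex fx x y x \<noteq> shifted_weight Vr Er fr r (a + y) r"
  shows "\<exists>f. nz_proper_labelling V E (shifted_weight V E f r a) f \<and>
    shifted_weight V E f r a r = shifted_weight Vr Er fr r (a + y) r"
proof -
  interpret swap: tree_edge_split V E x r Vx Ex Vr Er by (rule swap)
  define f where "f e = (if e \<in> Er then fr e else if e \<in> Ex then fx e else y)" for e
  have Er_not_Ex: "e \<notin> Ex" if "e \<in> Er" for e
    using edge_in_r[OF that] swap.edge_in_r disjoint by blast
  have "{r, x} \<notin> Er" "{r, x} \<notin> Ex"
    using edge_in_r swap.edge_in_r x_notin_r swap.x_notin_r by auto
  then have f_rx: "f {r, x} = y" by (simp add: f_def)
  have on_r: "shifted_weight V E f r a v = shifted_weight Vr Er fr r (a + y) v" if "v \<in> Vr" for v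
  proof -
    have "weight Vr Er f v = weight Vr Er fr v" by (rule weight_cong) (simp add: f_def)
    then show ?thesis
      using weight_r[OF that, of f] f_rx by (simp add: shifted_weight_def add_ac)
  qed
  have on_x: "shifted_weight V E f r a v = shifted_weight Vx Ex fx x y v" if "v \<in> Vx" for v
  proof -
    have "weight Vx Ex f v = weight Vx Ex fx v"
      by (rule weight_cong) (auto simp: f_def dest: Er_not_Ex)
    moreover have "v \<noteq> r" using that swap.x_notin_r by blast
    ultimately show ?thesis
      using swap.weight_r[OF that, of f] f_rx by (simp add: shifted_weight_def insert_commute)
  qed
  have "nz_proper_labelling V E (shifted_weight V E f r a) f"
    unfolding nz_proper_labelling_def
  proof (intro conjI ballI impI)
    fix e assume "e \<in> E"
    then show "f e \<noteq> 0"
      using fr fx \<open>y \<noteq> 0\<close> f_rx by (auto simp: edges f_def nz_proper_labelling_def)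
  next
    fix v assume "v \<in> V"
    then show "shifted_weight V E f r a v \<noteq> 0"
      using fr fx on_r on_x by (auto simp: vertices nz_proper_labelling_def)
  next
    fix u v assume "u \<in> V" "v \<in> V" "{u, v} \<in> E"
    then consider "{u, v} = {r, x}" | "{u, v} \<in> Er" | "{u, v} \<in> Ex" by (auto simp: edges)
    then show "shifted_weight V E f r a u \<noteq> shifted_weight V E f r a v"
    proof cases
      case 1
      then have "u = r \<and> v = x \<or> u = x \<and> v = r" by (auto simp: doubleton_eq_iff)
      then show ?thesis using on_r[OF root_r] on_x[OF root_x] roots by auto
    next
      case 2
      then have "u \<in> Vr" "v \<in> Vr" using edge_in_r by auto
      with 2 show ?thesis using fr on_r by (simp add: nz_proper_labelling_def)
    next
      case 3
      then have "u \<in> Vx" "v \<in> Vx" using swap.edge_in_r by auto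
      with 3 show ?thesis using fx on_x by (simp add: nz_proper_labelling_def)
    qed
  qed
  with on_r[OF root_r] show ?thesis by blast
qed

end

lemma tree_edge_split_exists:
  assumes tree: "is_tree V E" and e: "{r, x} \<in> E"
  obtains Vr Er Vx Ex where "tree_edge_split V E r x Vr Er Vx Ex"
proof -
  define E' where "E' = E - {{r, x}}"
  define Vr where "Vr = component E' r"
  define Vx where "Vx = component E' x"
  have sg: "simple_graph V E" and con: "connected_graph V E" and acy: "acyclic_graph E"
    using tree by (auto simp: is_tree_def)
  have sg': "simple_graph V E'" using sg by (rule simple_graph_subset_edges) (auto simp: E'_def)
  have acy': "acyclic_graph E'" using acy by (rule acyclic_graph_subset) (auto simp: E'_def)
  have rV: "r \<in> V" and xV: "x \<in> V" using simple_graph_edge_vertices[OF sg e] by auto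
  have V: "V = Vr \<union> Vx"
  proof
    show "V \<subseteq> Vr \<union> Vx"
      using connected_graph_delete_edge[OF con rV, of x] by (simp add: Vr_def Vx_def E'_def)
    show "Vr \<union> Vx \<subseteq> V"
      using component_subset[OF sg' rV] component_subset[OF sg' xV] by (simp add: Vr_def Vx_def)
  qed
  have "E = insert {r, x} ({d\<in>E'. d \<subseteq> Vr} \<union> {d\<in>E'. d \<subseteq> Vx})"
  proof (intro equalityI subsetI)
    fix d assume d: "d \<in> E"
    show "d \<in> insert {r, x} ({d\<in>E'. d \<subseteq> Vr} \<union> {d\<in>E'. d \<subseteq> Vx})"
    proof (cases "d = {r, x}")
      case False
      with d have dE': "d \<in> E'" by (simp add: E'_def)
      obtain a b where ab: "d = {a, b}" using simple_graph_edgeE[OF sg d] by blast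
      have "a \<in> Vr \<union> Vx" using simple_graph_edge_vertices[OF sg] d ab V by blast
      moreover have "b \<in> component E' s" if "a \<in> component E' s" for s
        using component_edge_closed[of a b E' s] dE' ab that by simp
      ultimately show ?thesis using dE' ab by (auto simp: Vr_def Vx_def)
    qed simp
  qed (use e in \<open>auto simp: E'_def\<close>)
  with V have "tree_edge_split V E r x Vr {d\<in>E'. d \<subseteq> Vr} Vx {d\<in>E'. d \<subseteq> Vx}"
    using component_is_tree[OF sg' acy' rV] component_is_tree[OF sg' acy' xV]
      tree_delete_edge_components_disjoint[OF tree e, folded E'_def]
    by (simp add: tree_edge_split_def Vr_def Vx_def)
  then show thesis by (rule that)
qed

definition has_nonleaf_neighbour :: "'a set set \<Rightarrow> 'a \<Rightarrow> bool" where
  "has_nonleaf_neighbour E r \<longleftrightarrow> (\<exists>x z. {r, x} \<in> E \<and> {x, z} \<in> E \<and> z \<noteq> r)"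

lemma star_if_no_nonleaf_neighbour:
  assumes sg: "simple_graph V E" and con: "connected_graph V E" and r: "r \<in> V"
    and star: "\<not> has_nonleaf_neighbour E r"
  shows "V = insert r (neighbours V E r)" and "E = (\<lambda>l. {r, l}) ` neighbours V E r"
proof -
  let ?L = "neighbours V E r"
  have leaf: "z = r" if "{r, y} \<in> E" "{y, z} \<in> E" for y z
    using star that by (auto simp: has_nonleaf_neighbour_def)
  have "v \<in> insert r ?L" if "(adj E)\<^sup>*\<^sup>* r v" for v
    using that
  proof (induction rule: rtranclp_induct)
    case (step y z)
    then have yz: "{y, z} \<in> E" by (simp add: adj_def)
    show ?case
    proof (cases "y = r")
      case True
      with yz show ?thesis
        using simple_graph_edge_vertices[OF sg yz] by (auto simp: neighbours_def insert_commute)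
    next
      case False
      with step.IH have "{r, y} \<in> E" by (simp add: neighbours_def insert_commute)
      with yz show ?thesis using leaf by blast
    qed
  qed simp
  with con r show V: "V = insert r ?L"
    by (auto simp: connected_graph_iff_rtranclp neighbours_def)
  show "E = (\<lambda>l. {r, l}) ` ?L"
  proof (intro equalityI subsetI)
    fix e assume e: "e \<in> E"
    then obtain u w where uw: "e = {u, w}" "u \<noteq> w" by (rule simple_graph_edgeE[OF sg])
    with e V have u: "u \<in> insert r ?L" and w: "w \<in> insert r ?L"
      using simple_graph_edge_vertices[OF sg] by blast+
    have "u = r \<or> w = r"
    proof (rule ccontr)
      assume "\<not> (u = r \<or> w = r)"
      with u have "{r, u} \<in> E" by (simp add: neighbours_def insert_commute)
      with e uw have "w = r" using leaf by blast
      with \<open>\<not> (u = r \<or> w = r)\<close> show False by blast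
    qed
    with u w uw show "e \<in> (\<lambda>l. {r, l}) ` ?L" by (auto simp: insert_commute)
  qed (auto simp: neighbours_def insert_commute)
qed

lemma exists_nonleaf_neighbour:
  assumes sg: "simple_graph V E" and con: "connected_graph V E" and "card V \<ge> 3"
  shows "\<exists>r\<in>V. has_nonleaf_neighbour E r"
proof -
  obtain r where r: "r \<in> V" using \<open>card V \<ge> 3\<close> by fastforce
  show ?thesis
  proof (cases "has_nonleaf_neighbour E r")
    case False
    let ?L = "neighbours V E r"
    have V: "V = insert r ?L"
      using star_if_no_nonleaf_neighbour[OF sg con r False] by blast
    have "finite ?L" using sg by (simp add: simple_graph_def neighbours_def)
    moreover have "card V \<le> Suc (card ?L)"
      using \<open>finite ?L\<close> by (subst V) (simp add: card_insert_if)
    ultimately obtain l l' where "l \<in> ?L" "l' \<in> ?L" "l \<noteq> l'"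
      using \<open>card V \<ge> 3\<close> card_le_Suc0_iff_eq[of ?L] by fastforce
    then have "l \<in> V" "{l, r} \<in> E" "{r, l'} \<in> E"
      by (auto simp: neighbours_def insert_commute)
    with \<open>l \<noteq> l'\<close> show ?thesis unfolding has_nonleaf_neighbour_def by blast
  qed (use r in blast)
qed

lemma ex_not_in_four:
  assumes "infinite (UNIV :: 'g set) \<or> card (UNIV :: 'g set) \<ge> 5"
  shows "\<exists>y::'g. y \<notin> {p, q, s, t}"
proof (rule ccontr)
  assume "\<not> (\<exists>y. y \<notin> {p, q, s, t})"
  then have univ: "(UNIV :: 'g set) = {p, q, s, t}" by blast
  have "card {p, q, s, t} \<le> 4" using card_length[of "[p, q, s, t]"] by simp
  with assms show False unfolding univ by simp
qed

lemma exists_labels_avoiding_with_sum: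
  fixes s t :: "'g::ab_group_add"
  assumes avoid: "\<And>p q s t :: 'g. \<exists>y. y \<notin> {p, q, s, t}"
    and "finite L" "L \<noteq> {}" "card L = 1 \<Longrightarrow> t \<notin> {0, s}"
  shows "\<exists>g. (\<forall>l\<in>L. g l \<notin> {0, s}) \<and> sum g L = t"
  using assms(2-)
proof (induction L arbitrary: t rule: finite_ne_induct)
  case (singleton l)
  then show ?case by (intro exI[of _ "\<lambda>_. t"]) auto
next
  case (insert l F)
  \<comment> \<open>If F is a singleton, its label t - h must itself avoid 0 and s.\<close>
  obtain h where h: "h \<notin> {0, s, t, t - s}" using avoid by blast
  then have "card F = 1 \<Longrightarrow> t - h \<notin> {0, s}" by (auto simp: algebra_simps)
  then obtain g where g: "\<forall>l\<in>F. g l \<notin> {0, s}" "sum g F = t - h"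
    using insert.IH by blast
  have "sum (g(l := h)) F = sum g F"
    using insert.hyps by (intro sum.cong) auto
  then have "sum (g(l := h)) (insert l F) = h + sum g F"
    using insert.hyps by simp
  with g h show ?case by (intro exI[of _ "g(l := h)"]) auto
qed

lemma star_shifted_weights:
  assumes V: "V = insert r L" and E: "E = (\<lambda>l. {r, l}) ` L" and "r \<notin> L"
  shows "shifted_weight V E (\<lambda>e. sum g (e - {r})) r a r = sum g L + a"
    and "l \<in> L \<Longrightarrow> shifted_weight V E (\<lambda>e. sum g (e - {r})) r a l = g l"
proof -
  have label: "sum g ({u, r} - {r}) = g u" if "u \<in> L" for u
  proof -
    have "{u, r} - {r} = {u}" using that \<open>r \<notin> L\<close> by blast
    then show ?thesis by simp
  qed
  have "neighbours V E r = L"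
    using \<open>r \<notin> L\<close> by (auto simp: V E neighbours_def doubleton_eq_iff)
  then show "shifted_weight V E (\<lambda>e. sum g (e - {r})) r a r = sum g L + a"
    using label by (simp add: shifted_weight_def weight_eq_sum_neighbours)
  assume "l \<in> L"
  moreover have "neighbours V E l = {r}"
    using \<open>l \<in> L\<close> \<open>r \<notin> L\<close> by (auto simp: V E neighbours_def doubleton_eq_iff)
  ultimately show "shifted_weight V E (\<lambda>e. sum g (e - {r})) r a l = g l"
    using label \<open>r \<notin> L\<close> by (auto simp: shifted_weight_def weight_eq_sum_neighbours insert_commute)
qed

lemma star_rooted_labelling:
  fixes a c :: "'g::ab_group_add"
  assumes avoid: "\<And>p q s t :: 'g. \<exists>y. y \<notin> {p, q, s, t}"
    and tree: "is_tree V E" and r: "r \<in> V" and star: "\<not> has_nonleaf_neighbour E r"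
    and "a \<noteq> 0" and "card V \<ge> 2 \<or> a \<noteq> c"
  shows "\<exists>f. nz_proper_labelling V E (shifted_weight V E f r a) f \<and>
    shifted_weight V E f r a r \<noteq> c"
proof -
  define L where "L = neighbours V E r"
  have sg: "simple_graph V E" and con: "connected_graph V E"
    using tree by (auto simp: is_tree_def)
  have V: "V = insert r L" and E: "E = (\<lambda>l. {r, l}) ` L"
    using star_if_no_nonleaf_neighbour[OF sg con r star] unfolding L_def by blast+
  have r_notin: "r \<notin> L"
    using simple_graph_edge_neq[OF sg, of r r] by (auto simp: L_def neighbours_def)
  have fin: "finite L" using sg by (simp add: L_def simple_graph_def neighbours_def)
  show ?thesis
  proof (cases "L = {}")
    case True
    with V E have "V = {r}" "E = {}" by auto
    with \<open>a \<noteq> 0\<close> \<open>card V \<ge> 2 \<or> a \<noteq> c\<close> show ?thesis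
      by (intro exI[of _ "\<lambda>_. 0"]) (simp add: nz_proper_labelling_def shifted_weight_def weight_def)
  next
    case False
    obtain s where s: "s \<notin> {0, c, a}" using avoid by blast
    with \<open>a \<noteq> 0\<close> have "card L = 1 \<Longrightarrow> s - a \<notin> {0, s}" by auto
    then obtain g where g: "\<forall>l\<in>L. g l \<notin> {0, s}" "sum g L = s - a"
      using exists_labels_avoiding_with_sum[OF avoid fin False] by blast
    define f where "f = (\<lambda>e. sum g (e - {r}))"
    have w_r: "shifted_weight V E f r a r = s"
      using star_shifted_weights(1)[OF V E r_notin, of g a] g(2) by (simp add: f_def)
    have w_leaf: "shifted_weight V E f r a l = g l" if "l \<in> L" for l
      using star_shifted_weights(2)[OF V E r_notin that, of g a] by (simp add: f_def)
    have "nz_proper_labelling V E (shifted_weight V E f r a) f"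
      unfolding nz_proper_labelling_def
    proof (intro conjI ballI impI)
      fix e assume "e \<in> E"
      then obtain l where "l \<in> L" "e = {r, l}" by (auto simp: E)
      moreover have "{r, l} - {r} = {l}" using \<open>l \<in> L\<close> r_notin by blast
      ultimately show "f e \<noteq> 0" using g(1) by (simp add: f_def)
    next
      fix v assume "v \<in> V"
      then show "shifted_weight V E f r a v \<noteq> 0"
        using V w_r w_leaf s g(1) by auto
    next
      fix u v assume "{u, v} \<in> E"
      then obtain l where l: "l \<in> L" "{u, v} = {r, l}" by (auto simp: E)
      then have "u = r \<and> v = l \<or> u = l \<and> v = r" by (auto simp: doubleton_eq_iff)
      then show "shifted_weight V E f r a u \<noteq> shifted_weight V E f r a v"
        using w_r w_leaf[OF l(1)] g(1) l(1) by auto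
    qed
    with w_r s show ?thesis by auto
  qed
qed

lemma rooted_labelling_exists:
  fixes a c :: "'g::ab_group_add"
  assumes avoid: "\<And>p q s t :: 'g. \<exists>y. y \<notin> {p, q, s, t}"
    and "is_tree V E" "r \<in> V" "a \<noteq> 0 \<or> has_nonleaf_neighbour E r" "card V \<ge> 2 \<or> a \<noteq> c"
  shows "\<exists>f. nz_proper_labelling V E (shifted_weight V E f r a) f \<and>
    shifted_weight V E f r a r \<noteq> c"
  using assms(2-)
proof (induction "card V" arbitrary: V E r a c rule: less_induct)
  case less
  show ?case
  proof (cases "has_nonleaf_neighbour E r")
    case True
    then obtain x z where xz: "{r, x} \<in> E" "{x, z} \<in> E" "z \<noteq> r"
      by (auto simp: has_nonleaf_neighbour_def)
    obtain Vr Er Vx Ex where split: "tree_edge_split V E r x Vr Er Vx Ex"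
      using tree_edge_split_exists[OF \<open>is_tree V E\<close> xz(1)] .
    interpret tree_edge_split V E r x Vr Er Vx Ex by (rule split)
    interpret swap: tree_edge_split V E x r Vx Ex Vr Er by (rule swap)
    have "z \<in> Vx" using neighbour_of_x_in_x xz(2,3) .
    moreover have "x \<noteq> z"
      using simple_graph_edge_neq[of V E x z] \<open>is_tree V E\<close> xz(2) by (auto simp: is_tree_def)
    ultimately have "card Vx \<ge> 2"
      using root_x swap.finite_r by (metis card_2_iff card_mono empty_subsetI insert_subset)
    obtain y where y: "y \<notin> {0, - a, c - a}" using avoid by blast
    then have "y \<noteq> 0" "a + y \<noteq> 0" "a + y \<noteq> c"
      by (auto simp: add_eq_0_iff eq_diff_eq add.commute)
    then obtain fr where fr: "nz_proper_labelling Vr Er (shifted_weight Vr Er fr r (a + y)) fr"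
      "shifted_weight Vr Er fr r (a + y) r \<noteq> c"
      using less.hyps[OF card_r_less tree_r root_r] by blast
    obtain fx where "nz_proper_labelling Vx Ex (shifted_weight Vx Ex fx x y) fx"
      "shifted_weight Vx Ex fx x y x \<noteq> shifted_weight Vr Er fr r (a + y) r"
      using less.hyps[OF swap.card_r_less tree_x root_x] \<open>y \<noteq> 0\<close> \<open>card Vx \<ge> 2\<close> by blast
    with fr glue_labellings \<open>y \<noteq> 0\<close> show ?thesis by metis
  next
    case False
    with less.prems show ?thesis by (intro star_rooted_labelling[OF avoid]) auto
  qed
qed

theorem mainTheorem9:
  fixes V :: "'a set" and E :: "'a set set"
  assumes "is_tree V E"
    and "card V \<ge> 3"
    and "infinite (UNIV :: 'g::ab_group_add set) \<or> card (UNIV :: 'g set) \<ge> 5"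
  shows "\<exists>f :: 'a set \<Rightarrow> 'g.
           (\<forall>e\<in>E. f e \<noteq> 0) \<and>
           (\<forall>v\<in>V. weight V E f v \<noteq> 0) \<and>
           (\<forall>u\<in>V. \<forall>v\<in>V. {u, v} \<in> E \<longrightarrow> weight V E f u \<noteq> weight V E f v)"
proof -
  have avoid: "\<exists>y. y \<notin> {p, q, s, t}" for p q s t :: 'g
    using assms(3) by (rule ex_not_in_four)
  have "simple_graph V E" "connected_graph V E"
    using assms(1) by (auto simp: is_tree_def)
  then obtain r where "r \<in> V" "has_nonleaf_neighbour E r"
    using exists_nonleaf_neighbour assms(2) by blast
  then obtain f :: "'a set \<Rightarrow> 'g" where "nz_proper_labelling V E (weight V E f) f"
    using rooted_labelling_exists[OF avoid assms(1), of r 0 0] assms(2) by auto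
  then show ?thesis by (auto simp: nz_proper_labelling_def)
qed

end
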